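(* Let $x^*\in\mathbb{O}^n$. Then $x^*$ is an equilibrium of the PID opinion dynamics (i.e., $P_i(x^* )=\{x_i^*\}$ for every $i\in\mathcal V$) if and only if at least one of the following holds: (1) $x^*$ is a consensus state, i.e., $x_1^*=x_2^*=\cdots=x_n^*$; (2) for every $z\in\mathbb{O}$ with $z<\theta$, the set $\mathcal V_{\le z}(x^* )$ is a strictly cohesive set in $\mathcal G(W)$, and for every $z\in\mathbb{O}$ with $z>\theta$, the set $\mathcal V_{\ge z}(x^* )$ is a strictly cohesive set in $\mathcal G(W)$.
   Context: Let $n\ge 1$, $\mathcal V=\{1,\dots,n\}$, and let $W=(w_{ij})$ be an $n\times n$ row-stochastic matrix (nonnegative entries, each row summing to $1$); $\mathcal G(W)$ is the weighted directed graph on $\mathcal V$ with an edge $i\to j$ iff $w_{ij}>0$. The opinion set is a finite set of consecutive integers $\mathbb O=\{k,k+1,\dots,k+s\}$, and $\theta\in\mathbb O$ is a fixed "truth". For $x\in\mathbb O^n$, $i\in\mathcal V$, $z\in\mathbb O$, define the social cost $C^i_{\mathrm{social}}(z;x)=\sum_{j=1}^n w_{ij}|z-x_j|$ and the cognitive cost $C^i_{\mathrm{cog}}(z)=|z-\theta|$. The Pareto-improvement set is $P_i(x)=\{z\in\mathbb O: C^i_{\mathrm{social}}(z;x)\le C^i_{\mathrm{social}}(x_i;x),\ |z-\theta|\le |x_i-\theta|\}$. In the PID opinion dynamics, starting from $x(0)\in\mathbb O^n$, at each time $t+1$ a node $i$ is chosen uniformly at random from $\mathcal V$ and sets $x_i(t+1)$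 to an element chosen at random from $P_i(x(t))$; all other nodes keep their opinions. An equilibrium is a state $x^*$ with $P_i(x^* )=\{x^*_i\}$ for all $i$. For $x\in\mathbb O^n$ and $z\in\mathbb Z$, $\mathcal V_{\le z}(x)=\{j\in\mathcal V: x_j\le z\}$ and $\mathcal V_{\ge z}(x)=\{j\in\mathcal V: x_j\ge z\}$. A set $\mathcal M\subseteq\mathcal V$ is strictly cohesive if $\sum_{j\in\mathcal M}w_{ij}>\tfrac12$ for every $i\in\mathcal M$; by convention the empty set is strictly cohesive. *)

theory Defs
  imports Complex_Main
begin

definition row_stochastic :: "nat \<Rightarrow> (nat \<Rightarrow> nat \<Rightarrow> real) \<Rightarrow> bool" where
  "row_stochastic n W \<longleftrightarrow>
     (\<forall>i\<in>{1..n}. \<forall>j\<in>{1..n}. W i j \<ge> 0) \<and> (\<forall>i\<in>{1..n}. (\<Sum>j\<in>{1..n}. W i j) = 1)"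

definition opinion_set :: "int \<Rightarrow> nat \<Rightarrow> int set" where
  "opinion_set k s = {k..k + int s}"

definition social_cost :: "nat \<Rightarrow> (nat \<Rightarrow> nat \<Rightarrow> real) \<Rightarrow> nat \<Rightarrow> int \<Rightarrow> (nat \<Rightarrow> int) \<Rightarrow> real" where
  "social_cost n W i z x = (\<Sum>j\<in>{1..n}. W i j * real_of_int \<bar>z - x j\<bar>)"

definition cog_cost :: "int \<Rightarrow> int \<Rightarrow> int" where
  "cog_cost \<theta> z = \<bar>z - \<theta>\<bar>"

definition pareto_set :: "nat \<Rightarrow> (nat \<Rightarrow> nat \<Rightarrow> real) \<Rightarrow> int set \<Rightarrow> int \<Rightarrow> nat \<Rightarrow> (nat \<Rightarrow> int) \<Rightarrow> int set" where
  "pareto_set n W Opn \<theta> i x =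
     {z \<in> Opn. social_cost n W i z x \<le> social_cost n W i (x i) x \<and> cog_cost \<theta> z \<le> cog_cost \<theta> (x i)}"

definition is_equilibrium :: "nat \<Rightarrow> (nat \<Rightarrow> nat \<Rightarrow> real) \<Rightarrow> int set \<Rightarrow> int \<Rightarrow> (nat \<Rightarrow> int) \<Rightarrow> bool" where
  "is_equilibrium n W Opn \<theta> x \<longleftrightarrow> (\<forall>i\<in>{1..n}. pareto_set n W Opn \<theta> i x = {x i})"

definition V_le :: "nat \<Rightarrow> (nat \<Rightarrow> int) \<Rightarrow> int \<Rightarrow> nat set" where
  "V_le n x z = {j\<in>{1..n}. x j \<le> z}"

definition V_ge :: "nat \<Rightarrow> (nat \<Rightarrow> int) \<Rightarrow> int \<Rightarrow> nat set" where
  "V_ge n x z = {j\<in>{1..n}. x j \<ge> z}"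

definition strictly_cohesive :: "(nat \<Rightarrow> nat \<Rightarrow> real) \<Rightarrow> nat set \<Rightarrow> bool" where
  "strictly_cohesive W M \<longleftrightarrow> (\<forall>i\<in>M. (\<Sum>j\<in>M. W i j) > 1/2)"

definition is_consensus :: "nat \<Rightarrow> (nat \<Rightarrow> int) \<Rightarrow> bool" where
  "is_consensus n x \<longleftrightarrow> (\<forall>i\<in>{1..n}. \<forall>j\<in>{1..n}. x i = x j)"

end

theory Submission
  imports Defs
begin

text \<open>A node with opinion a > \<theta> can only improve cognitively by moving down, and its
  social cost z \<mapsto> \<Sum>j. w i j * |z - x j| is convex with integer breakpoints, dropping by
  2 m - 1 on the unit step from a - 1 to a, where m is the weight the node puts on the nodes
  with opinion \<ge> a. So the node is stuck exactly when m > 1/2; negating all opinions and the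
  truth gives the mirror statement for a < \<theta>. Since the upper level set of z grows as z
  decreases, these node-wise majority conditions say precisely that the upper level sets
  beyond \<theta> and the lower level sets below \<theta> are strictly cohesive. A consensus satisfies
  them too, its level sets being empty or everything, so the first alternative is subsumed.\<close>

lemma sum_signs_eq:
  fixes w :: "'a \<Rightarrow> 'b::comm_ring_1"
  assumes "finite A"
  shows "(\<Sum>j\<in>A. w j * (if P j then 1 else -1)) = 2 * sum w {j\<in>A. P j} - sum w A"
proof -
  have "(\<Sum>j\<in>A. w j * (if P j then 1 else -1))
      = (\<Sum>j\<in>A. 2 * (if P j then w j else 0) - w j)"
    by (rule sum.cong) auto
  also have "\<dots> = 2 * sum w {j\<in>A. P j} - sum w A"
    using assms by (simp add: sum_subtractf sum_distrib_left sum.inter_filter)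
  finally show ?thesis .
qed

lemma sum_abs_diff_step:
  assumes "finite A"
  shows "(\<Sum>j\<in>A. w j * real_of_int \<bar>(a - 1) - x j\<bar>) - (\<Sum>j\<in>A. w j * real_of_int \<bar>a - x j\<bar>)
     = 2 * sum w {j\<in>A. a \<le> x j} - sum w A"
proof -
  have "(\<Sum>j\<in>A. w j * real_of_int \<bar>(a - 1) - x j\<bar>) - (\<Sum>j\<in>A. w j * real_of_int \<bar>a - x j\<bar>)
     = (\<Sum>j\<in>A. w j * (if a \<le> x j then 1 else -1))"
    by (simp add: sum_subtractf[symmetric] right_diff_distrib[symmetric]) (rule sum.cong, auto)
  with sum_signs_eq[OF assms] show ?thesis by simp
qed

lemma sum_abs_diff_descent:
  assumes "finite A" and "\<forall>j\<in>A. w j \<ge> 0" and "z < a"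
  shows "(\<Sum>j\<in>A. w j * real_of_int \<bar>z - x j\<bar>) - (\<Sum>j\<in>A. w j * real_of_int \<bar>a - x j\<bar>)
     \<ge> real_of_int (a - z) * (2 * sum w {j\<in>A. a \<le> x j} - sum w A)"
proof -
  have "real_of_int (a - z) * (2 * sum w {j\<in>A. a \<le> x j} - sum w A)
     = real_of_int (a - z) * (\<Sum>j\<in>A. w j * (if a \<le> x j then 1 else -1))"
    by (simp only: sum_signs_eq[OF assms(1)])
  also have "\<dots> = (\<Sum>j\<in>A. w j * (real_of_int (a - z) * (if a \<le> x j then 1 else -1)))"
    by (simp add: sum_distrib_left mult.left_commute)
  also have "\<dots> \<le> (\<Sum>j\<in>A. w j * (real_of_int \<bar>z - x j\<bar> - real_of_int \<bar>a - x j\<bar>))"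
    using assms(2,3) by (intro sum_mono mult_left_mono) auto
  also have "\<dots> = (\<Sum>j\<in>A. w j * real_of_int \<bar>z - x j\<bar>) - (\<Sum>j\<in>A. w j * real_of_int \<bar>a - x j\<bar>)"
    by (simp add: sum_subtractf right_diff_distrib)
  finally show ?thesis .
qed

lemma social_cost_reflect: "social_cost n W i (- z) (\<lambda>j. - x j) = social_cost n W i z x"
  unfolding social_cost_def by (simp add: abs_minus_commute)

lemma V_ge_reflect: "V_ge n (\<lambda>j. - x j) (- z) = V_le n x z"
  unfolding V_ge_def V_le_def by auto

lemma pareto_set_reflect:
  "pareto_set n W (uminus ` Opn) (- \<theta>) i (\<lambda>j. - x j) = uminus ` pareto_set n W Opn \<theta> i x"
proof -
  have reflected_opinion: "z \<in> uminus ` Opn \<longleftrightarrow> - z \<in> Opn" for z :: int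
    by force
  have "z \<in> pareto_set n W (uminus ` Opn) (- \<theta>) i (\<lambda>j. - x j) \<longleftrightarrow>
      - z \<in> pareto_set n W Opn \<theta> i x" for z
    using social_cost_reflect[of n W i "- z" x] social_cost_reflect[of n W i "x i" x]
    by (auto simp: pareto_set_def cog_cost_def reflected_opinion abs_minus_commute)
  then show ?thesis
    by (force simp: image_iff)
qed

lemma pareto_set_eq_singleton_above_truth:
  assumes nonneg: "\<forall>j\<in>{1..n}. W i j \<ge> 0" and total: "(\<Sum>j\<in>{1..n}. W i j) = 1"
    and above: "\<theta> < x i" and range: "lo \<le> \<theta>" "x i \<le> hi"
  shows "pareto_set n W {lo..hi} \<theta> i x = {x i} \<longleftrightarrow> (\<Sum>j\<in>V_ge n x (x i). W i j) > 1/2"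
proof -
  define a where "a = x i"
  define P where "P = pareto_set n W {lo..hi} \<theta> i x"
  have step: "social_cost n W i (a - 1) x - social_cost n W i a x
      = 2 * (\<Sum>j\<in>V_ge n x a. W i j) - 1"
    using sum_abs_diff_step[of "{1..n}" "W i" a x] total unfolding social_cost_def V_ge_def by simp
  have descent: "social_cost n W i z x - social_cost n W i a x
      \<ge> real_of_int (a - z) * (2 * (\<Sum>j\<in>V_ge n x a. W i j) - 1)" if "z < a" for z
    using sum_abs_diff_descent[of "{1..n}" "W i" z a x] nonneg total that
    unfolding social_cost_def V_ge_def by simp
  show ?thesis
    unfolding a_def[symmetric] P_def[symmetric]
  proof
    assume P: "P = {a}"
    show "(\<Sum>j\<in>V_ge n x a. W i j) > 1/2"
    proof (rule ccontr)
      assume "\<not> ?thesis"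
      then have "a - 1 \<in> P"
        using step above range unfolding P_def pareto_set_def cog_cost_def a_def by auto
      with P show False by auto
    qed
  next
    assume majority: "(\<Sum>j\<in>V_ge n x a. W i j) > 1/2"
    have "z = a" if "z \<in> P" for z
    proof (rule ccontr)
      assume "z \<noteq> a"
      have cost: "social_cost n W i z x \<le> social_cost n W i a x"
        and "\<bar>z - \<theta>\<bar> \<le> \<bar>a - \<theta>\<bar>"
        using that unfolding P_def pareto_set_def cog_cost_def a_def by auto
      with \<open>z \<noteq> a\<close> above have "z < a" unfolding a_def by auto
      have "real_of_int (a - z) * (2 * (\<Sum>j\<in>V_ge n x a. W i j) - 1) > 0"
        using majority \<open>z < a\<close> by (intro mult_pos_pos) auto
      with descent[OF \<open>z < a\<close>] cost show False by linarith
    qed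
    moreover have "a \<in> P"
      using above range unfolding P_def pareto_set_def a_def by auto
    ultimately show "P = {a}" by blast
  qed
qed

lemma pareto_set_eq_singleton_iff:
  assumes nonneg: "\<forall>j\<in>{1..n}. W i j \<ge> 0" and total: "(\<Sum>j\<in>{1..n}. W i j) = 1"
    and "\<theta> \<in> {lo..hi}" and "x i \<in> {lo..hi}"
  shows "pareto_set n W {lo..hi} \<theta> i x = {x i} \<longleftrightarrow>
    (\<theta> < x i \<longrightarrow> (\<Sum>j\<in>V_ge n x (x i). W i j) > 1/2) \<and>
    (x i < \<theta> \<longrightarrow> (\<Sum>j\<in>V_le n x (x i). W i j) > 1/2)"
proof -
  consider "\<theta> < x i" | "x i < \<theta>" | "x i = \<theta>" by linarith
  then show ?thesis
  proof cases
    case 1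
    then show ?thesis
      using pareto_set_eq_singleton_above_truth[of n W i, OF nonneg total] assms(3,4) by simp
  next
    case 2
    have "pareto_set n W {lo..hi} \<theta> i x = {x i} \<longleftrightarrow>
        uminus ` pareto_set n W {lo..hi} \<theta> i x = uminus ` {x i}"
      by (rule inj_image_eq_iff[symmetric]) (simp add: inj_def)
    also have "\<dots> \<longleftrightarrow> pareto_set n W {- hi..- lo} (- \<theta>) i (\<lambda>j. - x j) = {- x i}"
      using pareto_set_reflect[of n W "{lo..hi}" \<theta> i x] by simp
    also have "\<dots> \<longleftrightarrow> (\<Sum>j\<in>V_le n x (x i). W i j) > 1/2"
      using pareto_set_eq_singleton_above_truth[of n W i "- \<theta>" "\<lambda>j. - x j", OF nonneg total]
        2 assms(3,4)
      by (simp add: V_ge_reflect)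
    finally show ?thesis using 2 by simp
  next
    case 3
    then have "pareto_set n W {lo..hi} \<theta> i x = {x i}"
      using assms(4) by (auto simp: pareto_set_def cog_cost_def)
    with 3 show ?thesis by simp
  qed
qed

lemma upper_level_sets_cohesive_iff:
  assumes nonneg: "\<forall>i\<in>{1..n}. \<forall>j\<in>{1..n}. W i j \<ge> 0" and range: "\<forall>i\<in>{1..n}. x i \<in> Opn"
  shows "(\<forall>z\<in>Opn. \<theta> < z \<longrightarrow> strictly_cohesive W (V_ge n x z)) \<longleftrightarrow>
    (\<forall>i\<in>{1..n}. \<theta> < x i \<longrightarrow> (\<Sum>j\<in>V_ge n x (x i). W i j) > 1/2)"
proof
  assume cohesive: "\<forall>z\<in>Opn. \<theta> < z \<longrightarrow> strictly_cohesive W (V_ge n x z)"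
  show "\<forall>i\<in>{1..n}. \<theta> < x i \<longrightarrow> (\<Sum>j\<in>V_ge n x (x i). W i j) > 1/2"
  proof (intro ballI impI)
    fix i assume "i \<in> {1..n}" "\<theta> < x i"
    then have "strictly_cohesive W (V_ge n x (x i))" and "i \<in> V_ge n x (x i)"
      using cohesive range by (auto simp: V_ge_def)
    then show "(\<Sum>j\<in>V_ge n x (x i). W i j) > 1/2" unfolding strictly_cohesive_def by blast
  qed
next
  assume majority: "\<forall>i\<in>{1..n}. \<theta> < x i \<longrightarrow> (\<Sum>j\<in>V_ge n x (x i). W i j) > 1/2"
  show "\<forall>z\<in>Opn. \<theta> < z \<longrightarrow> strictly_cohesive W (V_ge n x z)"
    unfolding strictly_cohesive_def
  proof (intro ballI impI)
    fix z i assume "\<theta> < z" "i \<in> V_ge n x z"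
    then have i: "i \<in> {1..n}" and "z \<le> x i" by (auto simp: V_ge_def)
    with majority \<open>\<theta> < z\<close> have "(\<Sum>j\<in>V_ge n x (x i). W i j) > 1/2" by auto
    also have "(\<Sum>j\<in>V_ge n x (x i). W i j) \<le> (\<Sum>j\<in>V_ge n x z. W i j)"
      using \<open>z \<le> x i\<close> nonneg i by (intro sum_mono2) (auto simp: V_ge_def)
    finally show "(\<Sum>j\<in>V_ge n x z. W i j) > 1/2" .
  qed
qed

lemma lower_level_sets_cohesive_iff:
  assumes nonneg: "\<forall>i\<in>{1..n}. \<forall>j\<in>{1..n}. W i j \<ge> 0" and range: "\<forall>i\<in>{1..n}. x i \<in> Opn"
  shows "(\<forall>z\<in>Opn. z < \<theta> \<longrightarrow> strictly_cohesive W (V_le n x z)) \<longleftrightarrow>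
    (\<forall>i\<in>{1..n}. x i < \<theta> \<longrightarrow> (\<Sum>j\<in>V_le n x (x i). W i j) > 1/2)"
  using upper_level_sets_cohesive_iff[OF nonneg, of "\<lambda>j. - x j" "uminus ` Opn" "- \<theta>"] range
  by (simp add: V_ge_reflect)

lemma consensus_level_sets_cohesive:
  assumes "is_consensus n x" and total: "\<forall>i\<in>{1..n}. (\<Sum>j\<in>{1..n}. W i j) = 1"
  shows "strictly_cohesive W (V_ge n x z)" and "strictly_cohesive W (V_le n x z)"
proof -
  obtain c where "\<forall>j\<in>{1..n}. x j = c"
    using assms(1) unfolding is_consensus_def by blast
  then have "V_ge n x z = (if z \<le> c then {1..n} else {})"
    and "V_le n x z = (if c \<le> z then {1..n} else {})"
    by (auto simp: V_ge_def V_le_def)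
  moreover have "strictly_cohesive W {}" and "strictly_cohesive W {1..n}"
    using total by (auto simp: strictly_cohesive_def)
  ultimately show "strictly_cohesive W (V_ge n x z)" and "strictly_cohesive W (V_le n x z)"
    by simp_all
qed

theorem theorem1:
  fixes n :: nat and W :: "nat \<Rightarrow> nat \<Rightarrow> real" and k :: int and s :: nat
    and \<theta> :: int and xs :: "nat \<Rightarrow> int"
  assumes "n \<ge> 1"
    and "row_stochastic n W"
    and "\<theta> \<in> opinion_set k s"
    and "\<forall>i\<in>{1..n}. xs i \<in> opinion_set k s"
  shows "is_equilibrium n W (opinion_set k s) \<theta> xs \<longleftrightarrow>
    (is_consensus n xs \<or>
     ((\<forall>z\<in>opinion_set k s. z < \<theta> \<longrightarrow> strictly_cohesive W (V_le n xs z)) \<and>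
      (\<forall>z\<in>opinion_set k s. z > \<theta> \<longrightarrow> strictly_cohesive W (V_ge n xs z))))"
proof -
  have nonneg: "\<forall>i\<in>{1..n}. \<forall>j\<in>{1..n}. W i j \<ge> 0"
    and total: "\<forall>i\<in>{1..n}. (\<Sum>j\<in>{1..n}. W i j) = 1"
    using assms(2) unfolding row_stochastic_def by auto
  have "is_equilibrium n W (opinion_set k s) \<theta> xs \<longleftrightarrow>
      (\<forall>i\<in>{1..n}. (\<theta> < xs i \<longrightarrow> (\<Sum>j\<in>V_ge n xs (xs i). W i j) > 1/2) \<and>
                  (xs i < \<theta> \<longrightarrow> (\<Sum>j\<in>V_le n xs (xs i). W i j) > 1/2))"
    using pareto_set_eq_singleton_iff nonneg total assms(3,4)
    unfolding is_equilibrium_def opinion_set_def by simp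
  also have "\<dots> \<longleftrightarrow>
      (\<forall>z\<in>opinion_set k s. z < \<theta> \<longrightarrow> strictly_cohesive W (V_le n xs z)) \<and>
      (\<forall>z\<in>opinion_set k s. z > \<theta> \<longrightarrow> strictly_cohesive W (V_ge n xs z))"
    using upper_level_sets_cohesive_iff[OF nonneg assms(4)]
      lower_level_sets_cohesive_iff[OF nonneg assms(4)]
    by blast
  finally show ?thesis
    using consensus_level_sets_cohesive[OF _ total] by blast
qed

end
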